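(* Let $d\ge 2$, $k\ge 1$, let $E\subset\mathbb{R}^d$ be compact, let $\mu$ be a Frostman measure on $E$, and let $\nu_k$ be the measure induced by $\mu$ (see context). Suppose that $\dim_{\mathcal H}(E)>s_{k,d}$. Then there exist distinct $r_1,r_2>0$ with $\nu_k\big(\Delta_k^{r_1}(E)\cap\Delta_k^{r_2}(E)\big)>0$. In fact, for any partition $(0,\infty)=\coprod_{\alpha\in A}R_\alpha$ with each $R_\alpha$ nonempty and countable, there exist distinct $\alpha_1,\alpha_2\in A$ and $r_1\in R_{\alpha_1}$, $r_2\in R_{\alpha_2}$ such that $\nu_k\big(\Delta_k^{r_1}(E)\cap\Delta_k^{r_2}(E)\big)>0$.
   Context: A Frostman measure on a compact set $E\subset\mathbb{R}^d$ is a nonzero finite positive Borel measure $\mu$ supported on $E$ with $\mu(B(x,\rho))\le C\rho^{s}$ for all $x\in\mathbb{R}^d$, $\rho>0$, for some exponent $s>0$ (less than $\dim_{\mathcal H}E$). Configuration map. For $x^1,\dots,x^{k+1}\in\mathbb{R}^d$: if $k\le d$, let $\vec v_{k,d}(x^1,\dots,x^{k+1})\in\mathbb{R}^{k(k+1)/2}$ be the vector with entries $|x^i-x^j|$, $1\le i<j\le k+1$, in lexicographic order; set $D=k(k+1)/2$. If $k>d$, let $m=d(k+1)-\binom{d+1}{2}$ and fix once and for all a set $P$ of $m$ edges of the complete graph on $\{1,\dots,k+1\}$ which is maximally independent in $\mathbb{R}^d$ (specifying the lengths $|x^i-x^j|$, $(i,j)\in P$, determines all other pairwise distances up to finitely many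 possibilities); then $\vec v_{k,d}(x^1,\dots,x^{k+1})=(|x^i-x^j|)_{(i,j)\in P}\in\mathbb{R}^m$ in lexicographic order, and set $D=m$. The measure $\nu_k$ on $\mathbb{R}^D$ is defined by $\int f\,d\nu_k=\int\cdots\int f(\vec v_{k,d}(x^1,\dots,x^{k+1}))\,d\mu(x^1)\cdots d\mu(x^{k+1})$ for $f\in C_0(\mathbb{R}^D)$. The configuration set is $\Delta_k(E)=\{\vec v_{k,d}(x^1,\dots,x^{k+1}): x^j\in E\}\subset\mathbb{R}^D$, and for $r>0$, $\Delta_k^r(E)=\{\vec t\in\Delta_k(E): r\vec t\in\Delta_k(E)\}$. The $L^2$-threshold is $s_{k,d}=\inf\{s:\ \dim_{\mathcal H}(E)>s\implies \nu_k \text{ has a density with }\int_{\Delta_k(E)}\nu_k^2(\vec t)\,d\vec t<\infty\}$, where $E$ ranges over all compact subsets of $\mathbb{R}^d$ (with $\nu_k$ induced by a Frostman measure on $E$). *)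

theory Defs
  imports "HOL-Analysis.Analysis"
begin

definition hausdorff_pre :: "real \<Rightarrow> real \<Rightarrow> 'a::metric_space set \<Rightarrow> ennreal" where
  "hausdorff_pre s \<delta> E =
     (INF U \<in> {U :: nat \<Rightarrow> 'a set. E \<subseteq> (\<Union>i. U i) \<and>
                 (\<forall>i. bounded (U i) \<and> diameter (U i) \<le> \<delta>)}.
        (\<Sum>i. ennreal (diameter (U i) powr s)))"

definition hausdorff_measure :: "real \<Rightarrow> 'a::metric_space set \<Rightarrow> ennreal" where
  "hausdorff_measure s E = (SUP \<delta> \<in> {0<..}. hausdorff_pre s \<delta> E)"

definition hausdorff_dim :: "'a::metric_space set \<Rightarrow> real" where
  "hausdorff_dim E = Inf {s. 0 < s \<and> hausdorff_measure s E = 0}"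

definition frostman :: "('a::euclidean_space) set \<Rightarrow> 'a measure \<Rightarrow> real \<Rightarrow> bool" where
  "frostman E \<mu> s \<longleftrightarrow>
     sets \<mu> = sets borel \<and> finite_measure \<mu> \<and> emeasure \<mu> (space \<mu>) \<noteq> 0 \<and>
     emeasure \<mu> (UNIV - E) = 0 \<and> 0 < s \<and> s < hausdorff_dim E \<and>
     (\<exists>C. \<forall>x \<rho>. 0 < \<rho> \<longrightarrow> measure \<mu> (ball x \<rho>) \<le> C * \<rho> powr s)"

text \<open>Points are indexed by 1..k+1; edges are pairs (i,j) with i<j.\<close>
definition edges :: "nat \<Rightarrow> (nat \<times> nat) set" where
  "edges k = {(i, j). 1 \<le> i \<and> i < j \<and> j \<le> k + 1}"

definition config_vec :: "(nat \<times> nat) set \<Rightarrow> (nat \<Rightarrow> 'a::metric_space) \<Rightarrow> (nat \<times> nat \<Rightarrow> real)" where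
  "config_vec I x = restrict (\<lambda>(i, j). dist (x i) (x j)) I"

text \<open>P is a maximally independent edge set in R^d: it has m = d(k+1) - binom(d+1,2)
  edges and, for (Lebesgue-)generic configurations, the lengths on P determine all
  pairwise distances up to finitely many possibilities.\<close>
definition max_indep :: "'d::finite itself \<Rightarrow> nat \<Rightarrow> (nat \<times> nat) set \<Rightarrow> bool" where
  "max_indep (_::'d itself) k P \<longleftrightarrow>
     P \<subseteq> edges k \<and> card P = CARD('d) * (k + 1) - ((CARD('d) + 1) choose 2) \<and>
     (AE x in PiM {1..k+1} (\<lambda>_. (lborel :: (real^'d) measure)).
        finite {config_vec (edges k) (y :: nat \<Rightarrow> real^'d) | y. y \<in> PiE {1..k+1} (\<lambda>_. UNIV) \<and>
                  (\<forall>(i, j) \<in> P. dist (y i) (y j) = dist (x i) (x j))})"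

definition config_index :: "'d::finite itself \<Rightarrow> nat \<Rightarrow> (nat \<times> nat) set \<Rightarrow> (nat \<times> nat) set" where
  "config_index (_::'d itself) k P = (if k \<le> CARD('d) then edges k else P)"

text \<open>Lebesgue measure on R^D, D = card I, realised as R^I.\<close>
definition leb_cfg :: "(nat \<times> nat) set \<Rightarrow> (nat \<times> nat \<Rightarrow> real) measure" where
  "leb_cfg I = PiM I (\<lambda>_. lborel)"

definition nu_k :: "(real^'d::finite) measure \<Rightarrow> nat \<Rightarrow> (nat \<times> nat) set \<Rightarrow> (nat \<times> nat \<Rightarrow> real) measure" where
  "nu_k \<mu> k P = (let I = config_index TYPE('d) k P in
      distr (PiM {1..k+1} (\<lambda>_. \<mu>)) (leb_cfg I) (config_vec I))"

definition Delta_k :: "(real^'d::finite) set \<Rightarrow> nat \<Rightarrow> (nat \<times> nat) set \<Rightarrow> (nat \<times> nat \<Rightarrow> real) set" where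
  "Delta_k E k P = config_vec (config_index TYPE('d) k P) ` (PiE {1..k+1} (\<lambda>_. E))"

definition Delta_k_r :: "real \<Rightarrow> (real^'d::finite) set \<Rightarrow> nat \<Rightarrow> (nat \<times> nat) set \<Rightarrow> (nat \<times> nat \<Rightarrow> real) set" where
  "Delta_k_r r E k P = {t \<in> Delta_k E k P.
      restrict (\<lambda>e. r * t e) (config_index TYPE('d) k P) \<in> Delta_k E k P}"

definition L2_config :: "(real^'d::finite) set \<Rightarrow> (real^'d) measure \<Rightarrow> nat \<Rightarrow> (nat \<times> nat) set \<Rightarrow> bool" where
  "L2_config E \<mu> k P \<longleftrightarrow> (let L = leb_cfg (config_index TYPE('d) k P) in
     (\<exists>f. f \<in> borel_measurable L \<and> nu_k \<mu> k P = density L f \<and>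
          (\<integral>\<^sup>+ t \<in> Delta_k E k P. (f t)\<^sup>2 \<partial>L) < \<infinity>))"

definition good_exponent :: "'d::finite itself \<Rightarrow> nat \<Rightarrow> (nat \<times> nat) set \<Rightarrow> real \<Rightarrow> bool" where
  "good_exponent (_::'d itself) k P s \<longleftrightarrow>
     (\<forall>(E :: (real^'d) set) \<mu> t. compact E \<and> hausdorff_dim E > s \<and> frostman E \<mu> t \<and> s < t
        \<longrightarrow> L2_config E \<mu> k P)"

definition L2_threshold :: "'d::finite itself \<Rightarrow> nat \<Rightarrow> (nat \<times> nat) set \<Rightarrow> ereal" where
  "L2_threshold d k P = Inf (ereal ` {s. good_exponent d k P s})"

end

theory Submission
  imports Defs
begin

text \<open>
  Because the Frostman exponent exceeds the \<open>L\<^sup>2\<close> threshold, \<open>\<nu>\<^sub>k\<close> has a density \<open>f\<close> with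
  respect to Lebesgue measure on \<open>\<real>\<^sup>D\<close>, and it is carried by the compact set \<open>\<Delta> = \<Delta>\<^sub>k(E)\<close>.
  Hence \<open>G = {t \<in> \<Delta>. f t > 0}\<close> has positive Lebesgue measure, and every Lebesgue-positive
  subset of \<open>G\<close> is \<open>\<nu>\<^sub>k\<close>-positive. A Steinhaus argument for dilations gives \<open>\<delta> > 0\<close> such that
  \<open>G \<inter> r\<^sub>1\<^sup>-\<^sup>1G \<inter> r\<^sub>2\<^sup>-\<^sup>1G\<close> has positive measure for all \<open>r\<^sub>1, r\<^sub>2 \<in> (1 - \<delta>, 1]\<close>: approximate \<open>G\<close> by a
  compact \<open>K\<close> from inside and an open \<open>V\<close> from outside, note that dilating by \<open>r \<le> 1\<close> does not
  decrease measure and (tube lemma) maps \<open>K\<close> into \<open>V\<close> for \<open>r\<close> near 1, and count measure in \<open>V\<close>.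
  That set lies in \<open>\<Delta>\<^sup>r\<^sup>1 \<inter> \<Delta>\<^sup>r\<^sup>2\<close>. For a partition of \<open>(0,\<infinity>)\<close> into countable pieces, take the piece
  containing 1 and a point of the uncountable interval \<open>(1 - \<delta>, 1)\<close> outside it.
\<close>

section \<open>Lebesgue measure on \<open>\<real>\<^sup>I\<close> and dilations\<close>

definition dilation :: "(nat \<times> nat) set \<Rightarrow> real \<Rightarrow> (nat \<times> nat \<Rightarrow> real) \<Rightarrow> (nat \<times> nat \<Rightarrow> real)" where
  "dilation I r t = restrict (\<lambda>e. r * t e) I"

lemma space_leb_cfg: "space (leb_cfg I) = PiE I (\<lambda>_. UNIV)"
  by (simp add: leb_cfg_def space_PiM)

lemma emeasure_leb_cfg_PiE:
  assumes "finite I" "\<And>e. e \<in> I \<Longrightarrow> A e \<in> sets borel"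
  shows "emeasure (leb_cfg I) (PiE I A) = (\<Prod>e\<in>I. emeasure lborel (A e))"
proof -
  interpret product_sigma_finite "\<lambda>_::nat \<times> nat. lborel :: real measure" by standard
  show ?thesis unfolding leb_cfg_def using assms by (subst emeasure_PiM) auto
qed

lemma emeasure_leb_cfg_box_finite:
  assumes "finite I"
  shows "emeasure (leb_cfg I) (PiE I (\<lambda>_. {a..b})) < \<infinity>"
  using assms by (simp add: emeasure_leb_cfg_PiE less_top[symmetric] emeasure_lborel_Icc_eq
      power_eq_top_ennreal_iff)

lemma leb_cfg_UN_boxes:
  assumes "finite I"
  shows "(\<Union>n::nat. PiE I (\<lambda>_. {-real n..real n})) = space (leb_cfg I)"
proof (intro equalityI subsetI)
  fix t assume t: "t \<in> space (leb_cfg I)"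
  obtain n :: nat where n: "(\<Sum>e\<in>I. \<bar>t e\<bar>) \<le> real n" using real_arch_simple by blast
  have "t e \<in> {-real n..real n}" if "e \<in> I" for e
    using n member_le_sum[of e I "\<lambda>e. \<bar>t e\<bar>"] that assms by (auto simp: abs_le_iff)
  then have "t \<in> PiE I (\<lambda>_. {-real n..real n})"
    using t by (auto simp: space_leb_cfg PiE_iff)
  then show "t \<in> (\<Union>n. PiE I (\<lambda>_. {-real n..real n}))" by blast
qed (auto simp: space_leb_cfg)

lemma measurable_dilation: "dilation I r \<in> leb_cfg I \<rightarrow>\<^sub>M leb_cfg I"
  unfolding dilation_def leb_cfg_def by measurable

lemma dilation_vimage_PiE:
  assumes "r > 0"
  shows "dilation I r -` PiE I A \<inter> space (leb_cfg I) = PiE I (\<lambda>e. (\<lambda>x. r * x) -` A e)"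
  using assms by (auto simp: dilation_def space_leb_cfg PiE_iff extensional_def)

lemma emeasure_lborel_mult_vimage:
  assumes "r > 0" "B \<in> sets borel"
  shows "emeasure lborel ((\<lambda>x::real. r * x) -` B) = ennreal (1/r) * emeasure lborel B"
proof -
  have "emeasure lborel ((\<lambda>x::real. r * x) -` B) = emeasure (distr lborel borel ((*) r)) B"
    using assms by (subst emeasure_distr) auto
  also have "\<dots> = ennreal (1/r) * emeasure lborel B"
    using assms by (simp add: lborel_distr_mult emeasure_density_const inverse_eq_divide)
  finally show ?thesis .
qed

lemma emeasure_leb_cfg_dilation_PiE:
  assumes "finite I" "r > 0" "\<And>e. e \<in> I \<Longrightarrow> A e \<in> sets borel"
  shows "emeasure (leb_cfg I) (dilation I r -` PiE I A \<inter> space (leb_cfg I))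
           = ennreal ((1/r) ^ card I) * emeasure (leb_cfg I) (PiE I A)"
proof -
  have mult_borel: "(\<lambda>x::real. r * x) -` B \<in> sets borel" if "B \<in> sets borel" for B
    using measurable_sets[of "\<lambda>x::real. r * x" borel borel B] that by simp
  have "emeasure (leb_cfg I) (dilation I r -` PiE I A \<inter> space (leb_cfg I))
      = (\<Prod>e\<in>I. ennreal (1/r) * emeasure lborel (A e))"
    using assms by (simp add: dilation_vimage_PiE emeasure_leb_cfg_PiE mult_borel emeasure_lborel_mult_vimage)
  then show ?thesis
    using assms by (simp add: prod.distrib ennreal_power emeasure_leb_cfg_PiE)
qed

lemma emeasure_leb_cfg_dilation_vimage:
  assumes I: "finite I" and r: "r > 0" and A: "A \<in> sets (leb_cfg I)"
  shows "emeasure (leb_cfg I) (dilation I r -` A \<inter> space (leb_cfg I))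
           = ennreal ((1/r) ^ card I) * emeasure (leb_cfg I) A"
proof -
  let ?P = "distr (leb_cfg I) (leb_cfg I) (dilation I r)"
  let ?Q = "density (leb_cfg I) (\<lambda>_. ennreal ((1/r) ^ card I))"
  define C where "C n = PiE I (\<lambda>_. {-real n..real n})" for n :: nat
  have "?P = ?Q"
  proof (rule measure_eqI_PiM_finite[where I=I and M="\<lambda>_. lborel"])
    show "sets ?P = sets (PiM I (\<lambda>_. lborel))" "sets ?Q = sets (PiM I (\<lambda>_. lborel))"
      by (simp_all add: leb_cfg_def)
    show "range C \<subseteq> prod_algebra I (\<lambda>_. lborel)"
      unfolding C_def using I by (auto intro!: prod_algebraI_finite)
    show "(\<Union>n. C n) = space (PiM I (\<lambda>_. lborel))"
      using leb_cfg_UN_boxes[OF I] by (simp add: C_def leb_cfg_def)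
  next
    fix B :: "nat \<times> nat \<Rightarrow> real set" assume "\<And>e. e \<in> I \<Longrightarrow> B e \<in> sets lborel"
    moreover from this have "PiE I B \<in> sets (leb_cfg I)"
      unfolding leb_cfg_def using I by measurable
    ultimately show "?P (PiE I B) = ?Q (PiE I B)"
      using I r by (simp add: emeasure_distr measurable_dilation emeasure_density_const
          emeasure_leb_cfg_dilation_PiE)
  next
    fix n
    have "C n \<in> sets (leb_cfg I)" unfolding C_def leb_cfg_def using I by measurable
    then show "?P (C n) \<noteq> \<infinity>"
      using I r emeasure_leb_cfg_box_finite[OF I, of "-real n" "real n"]
      by (simp add: C_def emeasure_distr measurable_dilation emeasure_leb_cfg_dilation_PiE
          ennreal_mult_eq_top_iff power_eq_top_ennreal_iff)
  qed (use I in simp)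
  then show ?thesis
    using A by (metis emeasure_distr emeasure_density_const measurable_dilation)
qed

lemma closed_space_leb_cfg: "closed (space (leb_cfg I))"
proof -
  have "space (leb_cfg I) = (\<Inter>e\<in>-I. {t. t e = undefined})"
    by (auto simp: space_leb_cfg PiE_def extensional_def)
  then show ?thesis
    by (simp add: closed_INT closed_Collect_eq)
qed

lemma measurable_leb_cfg_borel: "(\<lambda>t. t) \<in> leb_cfg I \<rightarrow>\<^sub>M borel"
proof (rule measurable_coordinatewise_then_product)
  fix e
  show "(\<lambda>t. t e) \<in> borel_measurable (leb_cfg I)"
  proof (cases "e \<in> I")
    case True
    then show ?thesis
      using measurable_component_singleton[of e I "\<lambda>_. lborel :: real measure"]
      unfolding leb_cfg_def by (simp only: measurable_cong_sets[OF refl sets_lborel])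
  next
    case False
    have "(\<lambda>_. undefined) \<in> borel_measurable (leb_cfg I)"
      by (rule measurable_const) (simp only: space_borel UNIV_I)
    then show ?thesis
      by (rule measurable_cong[THEN iffD2, rotated]) (metis False PiE_arb space_leb_cfg)
  qed
qed

lemma sets_leb_cfg_subset_borel: "sets (leb_cfg I) \<subseteq> sets borel"
proof -
  have "sets (leb_cfg I) = sigma_sets (space (leb_cfg I))
     {{t \<in> space (leb_cfg I). t e \<in> A} | e A. e \<in> I \<and> A \<in> sets (lborel :: real measure)}"
    unfolding leb_cfg_def by (simp add: sets_PiM_single space_PiM)
  also have "\<dots> \<subseteq> sets borel"
  proof (rule sets.sigma_sets_subset')
    show "space (leb_cfg I) \<in> sets borel"
      by (rule borel_closed[OF closed_space_leb_cfg])
    have "{t \<in> space (leb_cfg I). t e \<in> A} \<in> sets borel" if "A \<in> sets (lborel :: real measure)" for e A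
    proof -
      have "(\<lambda>t::nat \<times> nat \<Rightarrow> real. t e) -` A \<in> sets borel"
        using measurable_sets[OF borel_measurable_continuous_onI[OF continuous_on_product_coordinates]
            that[unfolded sets_lborel]]
        by simp
      moreover have "{t \<in> space (leb_cfg I). t e \<in> A} = space (leb_cfg I) \<inter> (\<lambda>t. t e) -` A"
        by blast
      ultimately show ?thesis
        using borel_closed[OF closed_space_leb_cfg] by (metis sets.Int)
    qed
    then show "{{t \<in> space (leb_cfg I). t e \<in> A} | e A. e \<in> I \<and> A \<in> sets (lborel :: real measure)}
          \<subseteq> sets borel"
      by blast
  qed
  finally show ?thesis .
qed

lemma closed_in_sets_leb_cfg:
  assumes "closed S" "S \<subseteq> space (leb_cfg I)"
  shows "S \<in> sets (leb_cfg I)"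
  using measurable_sets[OF measurable_leb_cfg_borel[of I] borel_closed[OF assms(1)]] assms(2)
  by (simp add: Int_absorb2)

lemma dilation_1: "t \<in> space (leb_cfg I) \<Longrightarrow> dilation I 1 t = t"
  by (simp add: dilation_def space_leb_cfg)

lemma dilation_dilation:
  assumes "t \<in> space (leb_cfg I)" "s * r = 1"
  shows "dilation I s (dilation I r t) = t"
proof -
  have "dilation I s (dilation I r t) = restrict t I"
    unfolding dilation_def by (rule restrict_ext) (simp add: assms(2) mult.assoc[symmetric])
  then show ?thesis using assms(1) by (simp add: space_leb_cfg)
qed

lemma continuous_on_dilation: "continuous_on UNIV (\<lambda>p. dilation I (fst p) (snd p))"
proof (rule continuous_on_coordinatewise_then_product)
  fix e
  have "continuous_on UNIV (\<lambda>p :: real \<times> (nat \<times> nat \<Rightarrow> real). fst p * snd p e)"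
    by (intro continuous_intros continuous_on_compose2[OF continuous_on_product_coordinates]) auto
  then show "continuous_on UNIV (\<lambda>p. dilation I (fst p) (snd p) e)"
    by (cases "e \<in> I") (simp_all add: dilation_def)
qed

lemma dilation_vimage_near_one_subset:
  assumes K: "compact K" "K \<subseteq> space (leb_cfg I)" and U: "open U" "K \<subseteq> U"
  shows "\<exists>\<delta>>0. \<forall>r. 1 - \<delta> < r \<longrightarrow> r \<le> 1 \<longrightarrow> dilation I r -` K \<inter> space (leb_cfg I) \<subseteq> U"
proof -
  define W where "W = (\<lambda>p. dilation I (fst p) (snd p)) -` U"
  have "open W"
    unfolding W_def by (rule open_vimage[OF U(1) continuous_on_dilation])
  moreover have "{1} \<times> K \<subseteq> W"
    using K(2) U(2) by (auto simp: W_def subset_iff dilation_1)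
  ultimately obtain X where X: "1 \<in> X" "open X" "X \<times> K \<subseteq> W"
    by (metis Elementary_Topology.tube_lemma[OF K(1)])
  then obtain \<epsilon> where \<epsilon>: "\<epsilon> > 0" "ball 1 \<epsilon> \<subseteq> X"
    by (meson open_contains_ball)
  define \<delta> where "\<delta> = min (1/2) (\<epsilon>/2)"
  have "dilation I r -` K \<inter> space (leb_cfg I) \<subseteq> U" if r: "1 - \<delta> < r" "r \<le> 1" for r
  proof
    fix t assume t: "t \<in> dilation I r -` K \<inter> space (leb_cfg I)"
    have "r > 1/2" using r by (simp add: \<delta>_def)
    \<comment> \<open>t is recovered from the point dilation I r t of K by the dilation with factor 1/r near 1\<close>
    then have "dist 1 (1/r) \<le> 2 * (1 - r)"
      using r mult_left_mono[of 1 "2 * r" "1 - r"] by (simp add: dist_real_def field_simps)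
    also have "\<dots> < \<epsilon>" using r by (simp add: \<delta>_def)
    finally have "(1/r, dilation I r t) \<in> W" using X(3) \<epsilon>(2) t by auto
    moreover have "dilation I (1/r) (dilation I r t) = t"
      using t \<open>r > 1/2\<close> by (intro dilation_dilation) auto
    ultimately show "t \<in> U" by (simp add: W_def)
  qed
  moreover have "\<delta> > 0" using \<epsilon>(1) by (simp add: \<delta>_def)
  ultimately show ?thesis by blast
qed

lemma measure_Int_ge:
  assumes "A \<in> sets M" "B \<in> sets M" "V \<in> fmeasurable M" "A \<subseteq> V" "B \<subseteq> V"
  shows "measure M A + measure M B - measure M V \<le> measure M (A \<inter> B)"
proof -
  have fin: "A \<in> fmeasurable M" "B \<in> fmeasurable M"
    using assms by (auto intro: fmeasurableI2)
  have "measure M (A \<union> B) \<le> measure M V"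
    using assms fin by (intro measure_mono_fmeasurable) auto
  then show ?thesis using measure_Un3[OF fin] by simp
qed

lemma emeasure_Int3_pos:
  assumes "A \<in> sets M" "B \<in> sets M" "C \<in> sets M" "V \<in> fmeasurable M" "A \<subseteq> V" "B \<subseteq> V" "C \<subseteq> V"
    and "2 * measure M V < measure M A + measure M B + measure M C"
  shows "0 < emeasure M (A \<inter> B \<inter> C)"
proof -
  have "measure M A + measure M B - measure M V \<le> measure M (A \<inter> B)"
    using assms by (intro measure_Int_ge) auto
  moreover have "measure M (A \<inter> B) + measure M C - measure M V \<le> measure M (A \<inter> B \<inter> C)"
    using assms by (intro measure_Int_ge) auto
  ultimately have "0 < measure M (A \<inter> B \<inter> C)" using assms(8) by linarith
  then show ?thesis by (simp add: measure_def enn2real_positive_iff)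
qed

lemma measure_leb_cfg_dilation_vimage_ge:
  assumes I: "finite I" and r: "0 < r" "r \<le> 1" and A: "A \<in> sets (leb_cfg I)"
  shows "measure (leb_cfg I) A \<le> measure (leb_cfg I) (dilation I r -` A \<inter> space (leb_cfg I))"
proof -
  have "measure (leb_cfg I) (dilation I r -` A \<inter> space (leb_cfg I))
      = (1/r) ^ card I * measure (leb_cfg I) A"
    using emeasure_leb_cfg_dilation_vimage[OF I r(1) A] r(1)
    by (simp add: measure_def enn2real_mult)
  moreover have "1 \<le> (1/r) ^ card I" using r by simp
  ultimately show ?thesis by (simp add: mult_le_cancel_right1)
qed

section \<open>Overlapping dilations near the identity\<close>

lemma leb_cfg_open_box:
  assumes I: "finite I"
  obtains \<Omega> where "open \<Omega>" "PiE I (\<lambda>_. {-c..c}) \<subseteq> \<Omega>" "\<Omega> \<inter> space (leb_cfg I) \<in> fmeasurable (leb_cfg I)"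
proof -
  define \<Omega> where "\<Omega> = {t. \<forall>e\<in>I. t e \<in> {-(\<bar>c\<bar>+1)<..<\<bar>c\<bar>+1}}"
  have "open \<Omega>"
    unfolding \<Omega>_def
    using product_topology_basis'[OF I, of "\<lambda>_. {-(\<bar>c\<bar>+1)<..<\<bar>c\<bar>+1}" "\<lambda>e. e"] by auto
  moreover have "PiE I (\<lambda>_. {-c..c}) \<subseteq> \<Omega>"
    by (force simp: \<Omega>_def PiE_iff)
  moreover have "\<Omega> \<inter> space (leb_cfg I) = PiE I (\<lambda>_. {-(\<bar>c\<bar>+1)<..<\<bar>c\<bar>+1})"
    by (auto simp: \<Omega>_def space_leb_cfg PiE_iff)
  moreover have "PiE I (\<lambda>_. {-(\<bar>c\<bar>+1)<..<\<bar>c\<bar>+1}) \<in> sets (leb_cfg I)"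
    unfolding leb_cfg_def using I by measurable
  moreover have "emeasure (leb_cfg I) (PiE I (\<lambda>_. {-(\<bar>c\<bar>+1)<..<\<bar>c\<bar>+1})) < \<infinity>"
    using I by (simp add: emeasure_leb_cfg_PiE less_top[symmetric] power_eq_top_ennreal_iff)
  ultimately show ?thesis
    by (intro that[of \<Omega>]) (auto intro: fmeasurableI)
qed

text \<open>The regularity theorems of the library are stated for finite measures on the Borel sets of
  the whole type, so Lebesgue measure is first restricted to a set of finite measure.\<close>

lemma leb_cfg_restriction_as_borel_measure:
  assumes B: "B \<in> fmeasurable (leb_cfg I)"
  obtains N :: "(nat \<times> nat \<Rightarrow> real) measure" where "sets N = sets borel" "emeasure N (space N) \<noteq> \<infinity>"
    "\<And>X. X \<in> sets borel \<Longrightarrow> emeasure N X = emeasure (leb_cfg I) (B \<inter> X)"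
    "\<And>X. X \<in> sets (leb_cfg I) \<Longrightarrow> X \<subseteq> B \<Longrightarrow> emeasure N X = measure (leb_cfg I) X"
proof -
  define N where "N = distr (density (leb_cfg I) (indicator B)) borel (\<lambda>t. t)"
  have sets_N: "sets N = sets borel" by (simp add: N_def)
  have B_sets: "B \<in> sets (leb_cfg I)" using B by (simp add: fmeasurable_def)
  have emeasure_N: "emeasure N X = emeasure (leb_cfg I) (B \<inter> X)" if "X \<in> sets borel" for X
  proof -
    have "X \<inter> space (leb_cfg I) \<in> sets (leb_cfg I)"
      using measurable_sets[OF measurable_leb_cfg_borel that] by (simp add: Int_commute)
    moreover have "B \<inter> (X \<inter> space (leb_cfg I)) = B \<inter> X"
      using sets.sets_into_space[OF B_sets] by blast
    ultimately show ?thesis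
      using that B_sets by (simp add: N_def emeasure_distr measurable_leb_cfg_borel
          emeasure_restricted Int_commute[of "(\<lambda>t. t) -` X"])
  qed
  moreover have "emeasure N (space N) \<noteq> \<infinity>"
    using emeasure_N[of UNIV] B by (simp add: space_borel sets_eq_imp_space_eq[OF sets_N] fmeasurable_def less_top)
  moreover have "emeasure N X = measure (leb_cfg I) X" if "X \<in> sets (leb_cfg I)" "X \<subseteq> B" for X
    using that emeasure_N[of X] sets_leb_cfg_subset_borel fmeasurableI2[OF B that(2,1)]
    by (auto simp: Int_absorb1 emeasure_eq_measure2)
  ultimately show ?thesis using that sets_N by blast
qed

lemma leb_cfg_inner_approx:
  assumes I: "finite I" and G: "G \<in> sets (leb_cfg I)" and G_bounded: "G \<subseteq> PiE I (\<lambda>_. {-c..c})"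
    and \<epsilon>: "\<epsilon> > 0"
  obtains K where "compact K" "K \<subseteq> G" "measure (leb_cfg I) G - \<epsilon> < measure (leb_cfg I) K"
proof (cases "measure (leb_cfg I) G - \<epsilon> < 0")
  case True
  then show ?thesis using that[of "{}"] by simp
next
  case False
  define L where "L = leb_cfg I"
  obtain \<Omega> where \<Omega>: "open \<Omega>" "PiE I (\<lambda>_. {-c..c}) \<subseteq> \<Omega>" "\<Omega> \<inter> space L \<in> fmeasurable L"
    unfolding L_def by (rule leb_cfg_open_box[OF I])
  have G_\<Omega>: "G \<subseteq> \<Omega> \<inter> space L"
    using G_bounded \<Omega>(2) sets.sets_into_space[OF G] by (auto simp: L_def)
  obtain N where sets_N: "sets N = sets borel" and N_finite: "emeasure N (space N) \<noteq> \<infinity>"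
    and "\<And>X. X \<in> sets borel \<Longrightarrow> emeasure N X = emeasure L (\<Omega> \<inter> space L \<inter> X)"
    and N_eq: "\<And>X. X \<in> sets L \<Longrightarrow> X \<subseteq> \<Omega> \<inter> space L \<Longrightarrow> emeasure N X = measure L X"
    unfolding L_def by (rule leb_cfg_restriction_as_borel_measure[OF \<Omega>(3)[unfolded L_def]]) simp
  have G_borel: "G \<in> sets borel" using G sets_leb_cfg_subset_borel by blast
  have "ennreal (measure L G - \<epsilon>) < emeasure N G"
    using False \<epsilon> G_\<Omega> G N_eq[of G] by (simp add: ennreal_lessI L_def)
  then obtain K where K: "K \<subseteq> G" "compact K" "ennreal (measure L G - \<epsilon>) < emeasure N K"
    using inner_regular[OF sets_N N_finite G_borel] by (auto simp: less_SUP_iff)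
  have "K \<in> sets L"
    using K(1,2) sets.sets_into_space[OF G]
    by (auto simp: L_def intro!: closed_in_sets_leb_cfg compact_imp_closed)
  moreover have "K \<subseteq> \<Omega> \<inter> space L" using K(1) G_\<Omega> by blast
  ultimately have "emeasure N K = measure L K" by (rule N_eq)
  then show ?thesis
    using that K False by (simp add: ennreal_less_iff L_def)
qed

lemma leb_cfg_outer_approx:
  assumes I: "finite I" and G: "G \<in> sets (leb_cfg I)" and G_bounded: "G \<subseteq> PiE I (\<lambda>_. {-c..c})"
    and \<epsilon>: "\<epsilon> > 0"
  obtains U where "open U" "G \<subseteq> U" "U \<inter> space (leb_cfg I) \<in> fmeasurable (leb_cfg I)"
    "measure (leb_cfg I) (U \<inter> space (leb_cfg I)) < measure (leb_cfg I) G + \<epsilon>"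
proof -
  define L where "L = leb_cfg I"
  obtain \<Omega> where \<Omega>: "open \<Omega>" "PiE I (\<lambda>_. {-c..c}) \<subseteq> \<Omega>" "\<Omega> \<inter> space L \<in> fmeasurable L"
    unfolding L_def by (rule leb_cfg_open_box[OF I])
  define B where "B = \<Omega> \<inter> space L"
  have G_B: "G \<subseteq> B"
    using G_bounded \<Omega>(2) sets.sets_into_space[OF G] by (auto simp: B_def L_def)
  obtain N where sets_N: "sets N = sets borel" and N_finite: "emeasure N (space N) \<noteq> \<infinity>"
    and emeasure_N: "\<And>X. X \<in> sets borel \<Longrightarrow> emeasure N X = emeasure L (B \<inter> X)"
    and N_eq: "\<And>X. X \<in> sets L \<Longrightarrow> X \<subseteq> B \<Longrightarrow> emeasure N X = measure L X"
    unfolding B_def L_def by (rule leb_cfg_restriction_as_borel_measure[OF \<Omega>(3)[unfolded L_def]]) simp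
  have G_borel: "G \<in> sets borel" using G sets_leb_cfg_subset_borel by blast
  have "emeasure N G < ennreal (measure L G + \<epsilon>)"
    using \<epsilon> G_B G N_eq[of G] by (simp add: L_def ennreal_lessI measure_nonneg)
  then obtain U where U: "G \<subseteq> U" "open U" "emeasure N U < ennreal (measure L G + \<epsilon>)"
    using outer_regular[OF sets_N N_finite G_borel] by (auto simp: INF_less_iff)
  have "U \<inter> space L \<in> sets L"
    using measurable_sets[OF measurable_leb_cfg_borel[of I] borel_open[OF U(2)]] by (simp add: L_def)
  then have "B \<inter> (U \<inter> space L) \<in> sets L"
    by (rule sets.Int[OF fmeasurableD[OF \<Omega>(3), folded B_def]])
  moreover have "B \<inter> (U \<inter> space L) = U \<inter> \<Omega> \<inter> space L" by (auto simp: B_def)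
  ultimately have "U \<inter> \<Omega> \<inter> space L \<in> sets L" by simp
  then have BU: "U \<inter> \<Omega> \<inter> space L \<in> fmeasurable L"
    by (rule fmeasurableI2[OF \<Omega>(3), rotated]) blast
  have "ennreal (measure L (U \<inter> \<Omega> \<inter> space L)) < ennreal (measure L G + \<epsilon>)"
    using U(3) emeasure_N[OF borel_open[OF U(2)]] emeasure_eq_measure2[OF BU]
    by (simp add: B_def Int_ac)
  then have "measure L (U \<inter> \<Omega> \<inter> space L) < measure L G + \<epsilon>"
    by (simp add: ennreal_less_iff)
  moreover have "open (U \<inter> \<Omega>)" "G \<subseteq> U \<inter> \<Omega>"
    using U \<Omega>(1) G_B by (auto simp: B_def)
  ultimately show ?thesis
    using BU by (intro that[of "U \<inter> \<Omega>"]) (simp_all add: L_def)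
qed

lemma sets_leb_cfg_dilation_overlap:
  assumes "G \<in> sets (leb_cfg I)"
  shows "{t \<in> G. dilation I r1 t \<in> G \<and> dilation I r2 t \<in> G} \<in> sets (leb_cfg I)"
proof -
  have "{t \<in> G. dilation I r1 t \<in> G \<and> dilation I r2 t \<in> G}
      = G \<inter> (dilation I r1 -` G \<inter> space (leb_cfg I)) \<inter> (dilation I r2 -` G \<inter> space (leb_cfg I))"
    using sets.sets_into_space[OF assms] by blast
  then show ?thesis
    using assms measurable_sets[OF measurable_dilation assms] by (simp only: sets.Int)
qed

lemma compact_dilation_overlap:
  assumes I: "finite I" and K: "compact K" "K \<subseteq> space (leb_cfg I)" and U: "open U" "K \<subseteq> U"
    and V: "U \<inter> space (leb_cfg I) \<in> fmeasurable (leb_cfg I)"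
    and K_large: "2 * measure (leb_cfg I) (U \<inter> space (leb_cfg I)) < 3 * measure (leb_cfg I) K"
  shows "\<exists>\<delta>>0. \<forall>r1 r2. 1 - \<delta> < r1 \<longrightarrow> r1 \<le> 1 \<longrightarrow> 1 - \<delta> < r2 \<longrightarrow> r2 \<le> 1 \<longrightarrow>
           0 < emeasure (leb_cfg I)
                 (K \<inter> (dilation I r1 -` K \<inter> space (leb_cfg I)) \<inter> (dilation I r2 -` K \<inter> space (leb_cfg I)))"
proof -
  define L where "L = leb_cfg I"
  define Kr where "Kr r = dilation I r -` K \<inter> space L" for r
  have K_sets: "K \<in> sets L"
    using closed_in_sets_leb_cfg[OF compact_imp_closed[OF K(1)] K(2)] by (simp add: L_def)
  obtain \<delta> where \<delta>: "\<delta> > 0"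
    and near_one: "\<And>r. 1 - \<delta> < r \<Longrightarrow> r \<le> 1 \<Longrightarrow> Kr r \<subseteq> U"
    using dilation_vimage_near_one_subset[OF K U] by (auto simp: Kr_def L_def)
  have Kr: "Kr r \<in> sets L" "Kr r \<subseteq> U \<inter> space L" "measure L K \<le> measure L (Kr r)"
    if "1 - min \<delta> 1 < r" "r \<le> 1" for r
  proof -
    show "Kr r \<in> sets L"
      using measurable_sets[OF measurable_dilation K_sets[unfolded L_def]] by (simp add: Kr_def L_def)
    show "Kr r \<subseteq> U \<inter> space L"
      using near_one[of r] that by (auto simp: Kr_def)
    show "measure L K \<le> measure L (Kr r)"
      using measure_leb_cfg_dilation_vimage_ge[OF I _ _ K_sets[unfolded L_def], of r] that
      by (simp add: Kr_def L_def)
  qed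
  have overlap: "0 < emeasure L (K \<inter> Kr r1 \<inter> Kr r2)"
    if r1: "1 - min \<delta> 1 < r1" "r1 \<le> 1" and r2: "1 - min \<delta> 1 < r2" "r2 \<le> 1" for r1 r2
  proof (rule emeasure_Int3_pos)
    show "U \<inter> space L \<in> fmeasurable L" "K \<subseteq> U \<inter> space L"
      using V K(2) U(2) by (auto simp: L_def)
    show "2 * measure L (U \<inter> space L) < measure L K + measure L (Kr r1) + measure L (Kr r2)"
      using K_large Kr(3)[OF r1] Kr(3)[OF r2] unfolding L_def by linarith
  qed (use K_sets Kr(1,2)[OF r1] Kr(1,2)[OF r2] in auto)
  show ?thesis
  proof (intro exI[of _ "min \<delta> 1"] conjI allI impI)
    fix r1 r2 assume "1 - min \<delta> 1 < r1" "r1 \<le> 1" "1 - min \<delta> 1 < r2" "r2 \<le> 1"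
    then show "0 < emeasure (leb_cfg I)
        (K \<inter> (dilation I r1 -` K \<inter> space (leb_cfg I)) \<inter> (dilation I r2 -` K \<inter> space (leb_cfg I)))"
      using overlap[of r1 r2] by (simp add: Kr_def L_def)
  qed (use \<delta> in simp)
qed

lemma steinhaus_dilation_bounded:
  assumes I: "finite I" and G: "G \<in> sets (leb_cfg I)" and G_bounded: "G \<subseteq> PiE I (\<lambda>_. {-c..c})"
    and G_pos: "0 < emeasure (leb_cfg I) G"
  shows "\<exists>\<delta>>0. \<forall>r1 r2. 1 - \<delta> < r1 \<longrightarrow> r1 \<le> 1 \<longrightarrow> 1 - \<delta> < r2 \<longrightarrow> r2 \<le> 1 \<longrightarrow>
           0 < emeasure (leb_cfg I) {t \<in> G. dilation I r1 t \<in> G \<and> dilation I r2 t \<in> G}"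
proof -
  define L where "L = leb_cfg I"
  define g where "g = measure L G"
  obtain \<Omega> where \<Omega>: "open \<Omega>" "PiE I (\<lambda>_. {-c..c}) \<subseteq> \<Omega>" "\<Omega> \<inter> space L \<in> fmeasurable L"
    unfolding L_def by (rule leb_cfg_open_box[OF I])
  have "G \<subseteq> \<Omega> \<inter> space L"
    using G_bounded \<Omega>(2) sets.sets_into_space[OF G] by (auto simp: L_def)
  then have "G \<in> fmeasurable L"
    using G unfolding L_def by (intro fmeasurableI2[OF \<Omega>(3)[unfolded L_def]])
  then have "g > 0"
    using G_pos by (simp add: g_def L_def emeasure_eq_measure2)
  obtain K where K: "compact K" "K \<subseteq> G" and K_large: "g - g/6 < measure L K"
    using leb_cfg_inner_approx[OF I G G_bounded, of "g/6"] \<open>g > 0\<close> unfolding L_def g_def by auto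
  obtain U where U: "open U" "G \<subseteq> U" and V: "U \<inter> space L \<in> fmeasurable L"
    and V_small: "measure L (U \<inter> space L) < g + g/6"
    using leb_cfg_outer_approx[OF I G G_bounded, of "g/6"] \<open>g > 0\<close> unfolding L_def g_def by auto
  have "2 * measure L (U \<inter> space L) < 3 * measure L K"
    using K_large V_small \<open>g > 0\<close> by linarith
  moreover have "K \<subseteq> space L" "K \<subseteq> U"
    using K(2) U(2) sets.sets_into_space[OF G] by (auto simp: L_def)
  ultimately obtain \<delta> where "\<delta> > 0" and \<delta>: "\<And>r1 r2. 1 - \<delta> < r1 \<Longrightarrow> r1 \<le> 1 \<Longrightarrow> 1 - \<delta> < r2 \<Longrightarrow> r2 \<le> 1 \<Longrightarrow>
      0 < emeasure L (K \<inter> (dilation I r1 -` K \<inter> space L) \<inter> (dilation I r2 -` K \<inter> space L))"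
    using compact_dilation_overlap[OF I K(1) _ U(1) _ V[unfolded L_def]] unfolding L_def by blast
  have "0 < emeasure L {t \<in> G. dilation I r1 t \<in> G \<and> dilation I r2 t \<in> G}"
    if "1 - \<delta> < r1" "r1 \<le> 1" "1 - \<delta> < r2" "r2 \<le> 1" for r1 r2
  proof -
    note \<delta>[OF that]
    also have "emeasure L (K \<inter> (dilation I r1 -` K \<inter> space L) \<inter> (dilation I r2 -` K \<inter> space L))
        \<le> emeasure L {t \<in> G. dilation I r1 t \<in> G \<and> dilation I r2 t \<in> G}"
      using K(2) sets_leb_cfg_dilation_overlap[OF G] by (intro emeasure_mono) (auto simp: L_def)
    finally show ?thesis .
  qed
  then show ?thesis using \<open>\<delta> > 0\<close> unfolding L_def by blast
qed

lemma steinhaus_dilation: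
  assumes I: "finite I" and G: "G \<in> sets (leb_cfg I)" and G_pos: "0 < emeasure (leb_cfg I) G"
  shows "\<exists>\<delta>>0. \<forall>r1 r2. 1 - \<delta> < r1 \<longrightarrow> r1 \<le> 1 \<longrightarrow> 1 - \<delta> < r2 \<longrightarrow> r2 \<le> 1 \<longrightarrow>
           0 < emeasure (leb_cfg I) {t \<in> G. dilation I r1 t \<in> G \<and> dilation I r2 t \<in> G}"
proof -
  define box where "box n = PiE I (\<lambda>_. {-real n..real n})" for n :: nat
  have box_sets: "box n \<in> sets (leb_cfg I)" for n
    unfolding box_def leb_cfg_def using I by measurable
  obtain n where n: "0 < emeasure (leb_cfg I) (G \<inter> box n)"
  proof (rule ccontr)
    assume "\<not> thesis"
    then have "emeasure (leb_cfg I) (G \<inter> box n) = 0" for n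
      using that not_gr_zero by blast
    then have "emeasure (leb_cfg I) (\<Union>n. G \<inter> box n) = 0"
      using G box_sets by (intro emeasure_UN_eq_0) auto
    moreover have "(\<Union>n. G \<inter> box n) = G"
      using leb_cfg_UN_boxes[OF I] sets.sets_into_space[OF G] by (auto simp: box_def)
    ultimately show False using G_pos by simp
  qed
  have "G \<inter> box n \<subseteq> PiE I (\<lambda>_. {-real n..real n})" by (simp add: box_def)
  then obtain \<delta> where "\<delta> > 0" and \<delta>: "\<And>r1 r2. 1 - \<delta> < r1 \<Longrightarrow> r1 \<le> 1 \<Longrightarrow> 1 - \<delta> < r2 \<Longrightarrow> r2 \<le> 1 \<Longrightarrow>
      0 < emeasure (leb_cfg I) {t \<in> G \<inter> box n. dilation I r1 t \<in> G \<inter> box n \<and> dilation I r2 t \<in> G \<inter> box n}"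
    using steinhaus_dilation_bounded[OF I sets.Int[OF G box_sets] _ n] by blast
  have "0 < emeasure (leb_cfg I) {t \<in> G. dilation I r1 t \<in> G \<and> dilation I r2 t \<in> G}"
    if "1 - \<delta> < r1" "r1 \<le> 1" "1 - \<delta> < r2" "r2 \<le> 1" for r1 r2
  proof -
    note \<delta>[OF that]
    also have "emeasure (leb_cfg I)
          {t \<in> G \<inter> box n. dilation I r1 t \<in> G \<inter> box n \<and> dilation I r2 t \<in> G \<inter> box n}
        \<le> emeasure (leb_cfg I) {t \<in> G. dilation I r1 t \<in> G \<and> dilation I r2 t \<in> G}"
      by (rule emeasure_mono[OF _ sets_leb_cfg_dilation_overlap[OF G]]) auto
    finally show ?thesis .
  qed
  then show ?thesis using \<open>\<delta> > 0\<close> by blast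
qed

lemma countable_cover_distinct_near_one:
  fixes R :: "'a \<Rightarrow> real set"
  assumes "\<delta> > 0" and cover: "(\<Union>\<alpha>\<in>A. R \<alpha>) = {0<..}" and countable: "\<forall>\<alpha>\<in>A. countable (R \<alpha>)"
  shows "\<exists>\<alpha>1\<in>A. \<exists>\<alpha>2\<in>A. \<exists>r1\<in>R \<alpha>1. \<exists>r2\<in>R \<alpha>2. \<alpha>1 \<noteq> \<alpha>2 \<and>
           1 - \<delta> < r1 \<and> r1 \<le> 1 \<and> 1 - \<delta> < r2 \<and> r2 \<le> 1"
proof -
  define \<eta> where "\<eta> = min \<delta> 1"
  have \<eta>: "0 < \<eta>" "\<eta> \<le> \<delta>" "\<eta> \<le> 1" using \<open>\<delta> > 0\<close> by (auto simp: \<eta>_def)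
  have "1 \<in> (\<Union>\<alpha>\<in>A. R \<alpha>)" using cover by simp
  then obtain \<alpha>1 where \<alpha>1: "\<alpha>1 \<in> A" "1 \<in> R \<alpha>1" by blast
  have "\<not> {1 - \<eta><..<1} \<subseteq> R \<alpha>1"
  proof
    assume "{1 - \<eta><..<1} \<subseteq> R \<alpha>1"
    then have "countable {1 - \<eta><..<1}" using countable \<alpha>1(1) countable_subset by blast
    then show False using uncountable_open_interval[of "1 - \<eta>" 1] \<eta>(1) by simp
  qed
  then obtain r where r: "r \<in> {1 - \<eta><..<1}" "r \<notin> R \<alpha>1" by blast
  then have "r \<in> (\<Union>\<alpha>\<in>A. R \<alpha>)" using cover \<eta>(3) by auto
  then obtain \<alpha>2 where \<alpha>2: "\<alpha>2 \<in> A" "r \<in> R \<alpha>2" by blast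
  have "\<alpha>1 \<noteq> \<alpha>2" using \<alpha>2 r by blast
  moreover have "1 - \<delta> < 1" "1 - \<delta> < r" "r \<le> 1" using r \<eta> by auto
  ultimately show ?thesis using \<alpha>1 \<alpha>2 by blast
qed

section \<open>Absolutely continuous measures\<close>

lemma emeasure_density_support_pos:
  assumes f: "f \<in> borel_measurable M" and A: "A \<in> sets M"
    and pos: "emeasure (density M f) A \<noteq> 0"
  shows "0 < emeasure M {x \<in> A. 0 < f x}"
proof (rule ccontr)
  have "{x \<in> A. 0 < f x} = A \<inter> {x \<in> space M. 0 < f x}"
    using sets.sets_into_space[OF A] by blast
  then have "{x \<in> A. 0 < f x} \<in> sets M" using A f by simp
  moreover assume "\<not> 0 < emeasure M {x \<in> A. 0 < f x}"
  ultimately have "AE x in M. x \<notin> {x \<in> A. 0 < f x}"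
    by (intro AE_not_in null_setsI) (simp_all add: not_gr_zero)
  then have "AE x in M. x \<in> A \<longrightarrow> f x = 0"
    by (rule AE_mp) (auto intro!: AE_I2)
  then have "A \<in> null_sets (density M f)"
    using null_sets_density_iff[OF f] A by blast
  then show False using null_setsD1 pos by blast
qed

lemma emeasure_density_pos_on_support:
  assumes f: "f \<in> borel_measurable M" and H: "H \<in> sets M" "\<forall>x\<in>H. 0 < f x"
    and pos: "0 < emeasure M H"
  shows "0 < emeasure (density M f) H"
proof (rule ccontr)
  assume "\<not> 0 < emeasure (density M f) H"
  then have "H \<in> null_sets (density M f)"
    using H(1) by (simp add: null_sets_def not_gr_zero)
  then have "AE x in M. x \<in> H \<longrightarrow> f x = 0"
    using null_sets_density_iff[OF f] by blast
  then have "AE x in M. x \<notin> H"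
    by (rule AE_mp) (use H(2) in \<open>auto intro!: AE_I2\<close>)
  then have "H \<in> null_sets M" using AE_iff_null_sets[OF H(1)] by blast
  then show False using null_setsD1 pos by fastforce
qed

lemma density_leb_cfg_dilation_overlap:
  assumes I: "finite I" and f: "f \<in> borel_measurable (leb_cfg I)"
    and D: "D \<in> sets (leb_cfg I)" and D_pos: "emeasure (density (leb_cfg I) f) D \<noteq> 0"
  shows "\<exists>\<delta>>0. \<forall>r1 r2. 1 - \<delta> < r1 \<longrightarrow> r1 \<le> 1 \<longrightarrow> 1 - \<delta> < r2 \<longrightarrow> r2 \<le> 1 \<longrightarrow>
           0 < emeasure (density (leb_cfg I) f) {t \<in> D. dilation I r1 t \<in> D \<and> dilation I r2 t \<in> D}"
proof -
  define G where "G = {t \<in> D. 0 < f t}"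
  have "G = D \<inter> {t \<in> space (leb_cfg I). 0 < f t}"
    using sets.sets_into_space[OF D] by (auto simp: G_def)
  then have G_sets: "G \<in> sets (leb_cfg I)" using D f by simp
  obtain \<delta> where "\<delta> > 0" and \<delta>: "\<And>r1 r2. 1 - \<delta> < r1 \<Longrightarrow> r1 \<le> 1 \<Longrightarrow> 1 - \<delta> < r2 \<Longrightarrow> r2 \<le> 1 \<Longrightarrow>
      0 < emeasure (leb_cfg I) {t \<in> G. dilation I r1 t \<in> G \<and> dilation I r2 t \<in> G}"
    using steinhaus_dilation[OF I G_sets] emeasure_density_support_pos[OF f D D_pos]
    unfolding G_def by blast
  have "0 < emeasure (density (leb_cfg I) f) {t \<in> D. dilation I r1 t \<in> D \<and> dilation I r2 t \<in> D}"
    if "1 - \<delta> < r1" "r1 \<le> 1" "1 - \<delta> < r2" "r2 \<le> 1" for r1 r2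
  proof -
    let ?H = "{t \<in> G. dilation I r1 t \<in> G \<and> dilation I r2 t \<in> G}"
    have "0 < emeasure (density (leb_cfg I) f) ?H"
      using emeasure_density_pos_on_support[OF f sets_leb_cfg_dilation_overlap[OF G_sets] _ \<delta>[OF that]]
      by (simp add: G_def)
    also have "\<dots> \<le> emeasure (density (leb_cfg I) f) {t \<in> D. dilation I r1 t \<in> D \<and> dilation I r2 t \<in> D}"
      using sets_leb_cfg_dilation_overlap[OF D] by (intro emeasure_mono) (auto simp: G_def)
    finally show ?thesis .
  qed
  then show ?thesis using \<open>\<delta> > 0\<close> by blast
qed

section \<open>Configuration sets\<close>

lemma finite_edges: "finite (edges k)"
proof -
  have "edges k \<subseteq> {1..k+1} \<times> {1..k+1}" by (auto simp: edges_def)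
  then show ?thesis by (rule finite_subset) simp
qed

lemma config_index_subset_edges:
  assumes "k > CARD('d) \<Longrightarrow> max_indep TYPE('d::finite) k P"
  shows "config_index TYPE('d) k P \<subseteq> edges k"
  using assms by (auto simp: config_index_def max_indep_def)

lemma continuous_on_config_vec: "continuous_on UNIV (config_vec I :: (nat \<Rightarrow> 'a::metric_space) \<Rightarrow> _)"
proof (rule continuous_on_coordinatewise_then_product)
  fix e :: "nat \<times> nat"
  obtain i j where e: "e = (i, j)" by fastforce
  have "continuous_on UNIV (\<lambda>x :: nat \<Rightarrow> 'a. dist (x i) (x j))"
    by (intro continuous_on_dist continuous_on_product_coordinates)
  then show "continuous_on UNIV (\<lambda>x :: nat \<Rightarrow> 'a. config_vec I x e)"
    by (cases "e \<in> I") (simp_all add: config_vec_def e)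
qed

lemma compact_PiE_const:
  assumes "compact E"
  shows "compact (PiE J (\<lambda>_. E))"
proof -
  define S where "S i = (if i \<in> J then E else {undefined})" for i
  have "PiE J (\<lambda>_. E) = PiE UNIV S"
    by (auto simp: S_def PiE_def Pi_def extensional_def)
  moreover have "compactin (product_topology (\<lambda>_. euclidean) UNIV) (PiE UNIV S)"
    using assms by (auto simp: compactin_PiE S_def)
  ultimately show ?thesis by (simp add: euclidean_product_topology)
qed

lemma compact_Delta_k: "compact E \<Longrightarrow> compact (Delta_k E k P)"
  unfolding Delta_k_def
  by (rule compact_continuous_image[OF continuous_on_subset[OF continuous_on_config_vec]
        compact_PiE_const]) auto

lemma sets_Delta_k:
  fixes E :: "(real^'d::finite) set"
  assumes "compact E"
  shows "Delta_k E k P \<in> sets (leb_cfg (config_index TYPE('d) k P))"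
  by (rule closed_in_sets_leb_cfg[OF compact_imp_closed[OF compact_Delta_k[OF assms]]])
    (auto simp: Delta_k_def config_vec_def space_leb_cfg)

lemma measurable_config_vec:
  fixes \<mu> :: "'a::{second_countable_topology, metric_space} measure"
  assumes \<mu>: "sets \<mu> = sets borel" and I: "I \<subseteq> edges k"
  shows "config_vec I \<in> PiM {1..k+1} (\<lambda>_. \<mu>) \<rightarrow>\<^sub>M leb_cfg I"
  unfolding config_vec_def leb_cfg_def
proof (rule measurable_restrict)
  fix e assume "e \<in> I"
  then obtain i j where e: "e = (i, j)" "i \<in> {1..k+1}" "j \<in> {1..k+1}"
    using I by (auto simp: edges_def)
  have "(\<lambda>x. x l) \<in> borel_measurable (PiM {1..k+1} (\<lambda>_. \<mu>))" if "l \<in> {1..k+1}" for l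
    using measurable_component_singleton[OF that, of "\<lambda>_. \<mu>"]
    by (simp only: measurable_cong_sets[OF refl \<mu>])
  then have "(\<lambda>x. dist (x i) (x j)) \<in> borel_measurable (PiM {1..k+1} (\<lambda>_. \<mu>))"
    using e by (intro borel_measurable_dist) auto
  then show "(\<lambda>x. case e of (i, j) \<Rightarrow> dist (x i) (x j)) \<in> PiM {1..k+1} (\<lambda>_. \<mu>) \<rightarrow>\<^sub>M lborel"
    by (simp only: e measurable_cong_sets[OF refl sets_lborel] prod.case)
qed

lemma AE_PiM_all_in:
  fixes J :: "'i set"
  assumes J: "finite J" and \<mu>: "sigma_finite_measure \<mu>"
    and E: "E \<in> sets \<mu>" "emeasure \<mu> (space \<mu> - E) = 0"
  shows "AE x in PiM J (\<lambda>_. \<mu>). \<forall>i\<in>J. x i \<in> E"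
proof (rule AE_finite_allI[OF J])
  interpret product_sigma_finite "\<lambda>_::'i. \<mu>"
    using \<mu> by (simp add: product_sigma_finite_def)
  fix i assume i: "i \<in> J"
  define B where "B = PiE J (\<lambda>j. if j = i then space \<mu> - E else space \<mu>)"
  have "emeasure (PiM J (\<lambda>_. \<mu>)) B = (\<Prod>j\<in>J. emeasure \<mu> (if j = i then space \<mu> - E else space \<mu>))"
    unfolding B_def using J E by (intro emeasure_PiM) auto
  also have "\<dots> = 0" using i J E(2) by (intro prod_zero) auto
  finally have "B \<in> null_sets (PiM J (\<lambda>_. \<mu>))"
    unfolding B_def using J E by (auto intro!: sets_PiM_I_finite)
  moreover have "{x \<in> space (PiM J (\<lambda>_. \<mu>)). x i \<notin> E} \<subseteq> B"
    by (auto simp: B_def space_PiM PiE_iff extensional_def)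
  ultimately show "AE x in PiM J (\<lambda>_. \<mu>). x i \<in> E"
    by (rule AE_I')
qed

lemma emeasure_nu_k_Delta_k:
  fixes E :: "(real^'d::finite) set"
  assumes E: "compact E" and \<mu>: "frostman E \<mu> t" and I: "config_index TYPE('d) k P \<subseteq> edges k"
  shows "emeasure (nu_k \<mu> k P) (Delta_k E k P) \<noteq> 0"
proof -
  define I where "I = config_index TYPE('d) k P"
  define M where "M = PiM {1..k+1} (\<lambda>_. \<mu>)"
  have \<mu>_sets: "sets \<mu> = sets borel" and "finite_measure \<mu>" and \<mu>_nonzero: "emeasure \<mu> (space \<mu>) \<noteq> 0"
    and \<mu>_E: "emeasure \<mu> (UNIV - E) = 0"
    using \<mu> by (auto simp: frostman_def)
  then interpret finite_measure \<mu> by simp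
  interpret product_sigma_finite "\<lambda>_::nat. \<mu>" by standard
  have space_\<mu>: "space \<mu> = UNIV" using sets_eq_imp_space_eq[OF \<mu>_sets] by simp
  have cv: "config_vec I \<in> M \<rightarrow>\<^sub>M leb_cfg I"
    unfolding M_def I_def by (rule measurable_config_vec[OF \<mu>_sets I])
  have \<Delta>: "Delta_k E k P \<in> sets (leb_cfg I)"
    unfolding I_def by (rule sets_Delta_k[OF E])
  have "AE x in M. \<forall>i\<in>{1..k+1}. x i \<in> E"
    unfolding M_def using E \<mu>_sets \<mu>_E space_\<mu>
    by (intro AE_PiM_all_in) (auto intro: sigma_finite_measure_axioms borel_closed compact_imp_closed)
  then have "AE x in M. config_vec I x \<in> Delta_k E k P"
    by (rule AE_mp) (auto intro!: AE_I2 simp: M_def space_PiM Delta_k_def I_def PiE_iff)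
  moreover have "nu_k \<mu> k P = distr M (leb_cfg I) (config_vec I)"
    by (simp add: nu_k_def I_def M_def Let_def)
  ultimately have "emeasure (nu_k \<mu> k P) (Delta_k E k P) = emeasure M (space M)"
    using \<Delta> cv measurable_sets[OF cv \<Delta>] by (auto simp: emeasure_distr intro!: emeasure_eq_AE)
  also have "\<dots> = (\<Prod>j\<in>{1..k+1}. emeasure \<mu> (space \<mu>))"
    unfolding M_def space_PiM by (intro emeasure_PiM) auto
  finally show ?thesis using \<mu>_nonzero by simp
qed

lemma nu_k_density:
  fixes E :: "(real^'d::finite) set"
  assumes E: "compact E" and \<mu>: "frostman E \<mu> t" and t: "ereal t > L2_threshold TYPE('d) k P"
  obtains f where "f \<in> borel_measurable (leb_cfg (config_index TYPE('d) k P))"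
    "nu_k \<mu> k P = density (leb_cfg (config_index TYPE('d) k P)) f"
proof -
  obtain s where "good_exponent TYPE('d) k P s" "s < t"
    using t by (auto simp: L2_threshold_def Inf_less_iff)
  moreover have "t < hausdorff_dim E" using \<mu> by (simp add: frostman_def)
  ultimately have "L2_config E \<mu> k P"
    using E \<mu> unfolding good_exponent_def by fastforce
  then show ?thesis
    using that by (auto simp: L2_config_def Let_def)
qed

lemma Delta_k_r_Int_Delta_k_r:
  fixes E :: "(real^'d::finite) set"
  shows "Delta_k_r r1 E k P \<inter> Delta_k_r r2 E k P
    = {t \<in> Delta_k E k P. dilation (config_index TYPE('d) k P) r1 t \<in> Delta_k E k P
                        \<and> dilation (config_index TYPE('d) k P) r2 t \<in> Delta_k E k P}"
  by (auto simp: Delta_k_r_def dilation_def)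

theorem theorem1p6:
  fixes E :: "(real^'d::finite) set" and \<mu> :: "(real^'d) measure"
    and k :: nat and P :: "(nat \<times> nat) set" and t :: real
  assumes "CARD('d) \<ge> 2" and "k \<ge> 1" and "compact E"
    and "frostman E \<mu> t"
    and "k > CARD('d) \<Longrightarrow> max_indep TYPE('d) k P"
    and "ereal (hausdorff_dim E) > L2_threshold TYPE('d) k P"
    and "ereal t > L2_threshold TYPE('d) k P"
  shows "(\<exists>r1 r2. 0 < r1 \<and> 0 < r2 \<and> r1 \<noteq> r2 \<and>
            emeasure (nu_k \<mu> k P) (Delta_k_r r1 E k P \<inter> Delta_k_r r2 E k P) > 0)
       \<and> (\<forall>(A :: 'a set) (R :: 'a \<Rightarrow> real set).
            (\<Union>\<alpha>\<in>A. R \<alpha>) = {0<..} \<and> disjoint_family_on R A \<and>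
            (\<forall>\<alpha>\<in>A. R \<alpha> \<noteq> {} \<and> countable (R \<alpha>))
            \<longrightarrow> (\<exists>\<alpha>1\<in>A. \<exists>\<alpha>2\<in>A. \<exists>r1\<in>R \<alpha>1. \<exists>r2\<in>R \<alpha>2. \<alpha>1 \<noteq> \<alpha>2 \<and>
                  emeasure (nu_k \<mu> k P) (Delta_k_r r1 E k P \<inter> Delta_k_r r2 E k P) > 0))"
proof -
  \<comment> \<open>The hypothesis on
    \<open>hausdorff_dim E\<close> is implied by \<open>frostman E \<mu> t\<close>.\<close>
  define I where "I = config_index TYPE('d) k P"
  have I: "I \<subseteq> edges k"
    unfolding I_def by (rule config_index_subset_edges[OF assms(5)])
  obtain f where f: "f \<in> borel_measurable (leb_cfg I)" "nu_k \<mu> k P = density (leb_cfg I) f"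
    by (rule nu_k_density[OF assms(3,4,7), folded I_def])
  have \<Delta>: "Delta_k E k P \<in> sets (leb_cfg I)"
    unfolding I_def by (rule sets_Delta_k[OF assms(3)])
  have \<Delta>_pos: "emeasure (density (leb_cfg I) f) (Delta_k E k P) \<noteq> 0"
    using emeasure_nu_k_Delta_k[OF assms(3,4) I[unfolded I_def]] by (simp add: f(2))
  obtain \<delta> where "\<delta> > 0" and overlap: "\<And>r1 r2. 1 - \<delta> < r1 \<Longrightarrow> r1 \<le> 1 \<Longrightarrow> 1 - \<delta> < r2 \<Longrightarrow> r2 \<le> 1 \<Longrightarrow>
      0 < emeasure (nu_k \<mu> k P) (Delta_k_r r1 E k P \<inter> Delta_k_r r2 E k P)"
    using density_leb_cfg_dilation_overlap[OF finite_subset[OF I finite_edges] f(1) \<Delta> \<Delta>_pos]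
    unfolding Delta_k_r_Int_Delta_k_r f(2) I_def by blast
  show ?thesis
  proof (intro conjI allI impI)
    show "\<exists>r1 r2. 0 < r1 \<and> 0 < r2 \<and> r1 \<noteq> r2 \<and>
        emeasure (nu_k \<mu> k P) (Delta_k_r r1 E k P \<inter> Delta_k_r r2 E k P) > 0"
    proof (intro exI conjI)
      show "0 < emeasure (nu_k \<mu> k P) (Delta_k_r 1 E k P \<inter> Delta_k_r (1 - min \<delta> 1 / 2) E k P)"
        using \<open>\<delta> > 0\<close> by (intro overlap) (simp_all add: min_def)
    qed (use \<open>\<delta> > 0\<close> in \<open>simp_all add: min_def\<close>)
  next
    fix A :: "'a set" and R :: "'a \<Rightarrow> real set"
    assume "(\<Union>\<alpha>\<in>A. R \<alpha>) = {0<..} \<and> disjoint_family_on R A \<and> (\<forall>\<alpha>\<in>A. R \<alpha> \<noteq> {} \<and> countable (R \<alpha>))"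
    then obtain \<alpha>1 \<alpha>2 r1 r2 where "\<alpha>1 \<in> A" "\<alpha>2 \<in> A" "r1 \<in> R \<alpha>1" "r2 \<in> R \<alpha>2" "\<alpha>1 \<noteq> \<alpha>2"
      and "1 - \<delta> < r1" "r1 \<le> 1" "1 - \<delta> < r2" "r2 \<le> 1"
      using countable_cover_distinct_near_one[OF \<open>\<delta> > 0\<close>, of R A] by blast
    then show "\<exists>\<alpha>1\<in>A. \<exists>\<alpha>2\<in>A. \<exists>r1\<in>R \<alpha>1. \<exists>r2\<in>R \<alpha>2. \<alpha>1 \<noteq> \<alpha>2 \<and>
        emeasure (nu_k \<mu> k P) (Delta_k_r r1 E k P \<inter> Delta_k_r r2 E k P) > 0"
      using overlap by blast
  qed
qed

end
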